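(* Let $k$ be a field of characteristic $0$ and let $\mathcal L$, $\mathcal L'$ be centreless Lie tori over $k$ of types $(\Delta,\Lambda)$ and $(\Delta',\Lambda')$ respectively. If $\mathcal L$ is isotopic to $\mathcal L'$, then $\Lambda/\Gamma(\mathcal L)\cong\Lambda'/\Gamma(\mathcal L')$ as groups.
   Context: An irreducible finite root system is a finite subset $\Delta$ of a finite-dimensional vector space with $0\in\Delta$ and $\Delta^\times:=\Delta\setminus\{0\}$ an irreducible (possibly non-reduced) root system in the usual sense; $Q=\mathrm{span}_{\mathbb Z}\Delta$, $\alpha^\vee$ coroots, $\Delta^\times_{\mathrm{ind}}=\Delta^\times\setminus2\Delta^\times$. Let $\Lambda$ be a finitely generated free abelian group. A Lie torus of type $(\Delta,\Lambda)$ is a Lie algebra $\mathcal L$ over $k$ with a $Q\times\Lambda$-grading $\mathcal L=\bigoplus\mathcal L_\alpha^\lambda$ ($\mathcal L_\alpha:=\bigoplus_\lambda\mathcal L_\alpha^\lambda$, $\mathcal L^\lambda:=\bigoplus_\alpha\mathcal L_\alpha^\lambda$) such that: (LT1) $\{\alpha:\mathcal L_\alpha\neq0\}=\Delta$; (LT2)(i) $\mathcal L_\alpha^0\neq0$ for $\alpha\in\Delta^\times_{\mathrm{ind}}$; (ii) whenever $\alpha\in\Delta^\times$ and $\mathcal L_\alpha^\lambda\ne0$ there are $e\in\mathcal L_\alpha^\lambda$, $f\in\mathcal L_{-\alpha}^{-\lambda}$ with $\mathcal L_\alpha^\lambda=ke$, $\mathcal L_{-\alpha}^{-\lambda}=kf$,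 $[[e,f],x]=\langle\beta,\alpha^\vee\rangle x$ for $x\in\mathcal L_\beta$, $\beta\in Q$; (LT3) $\mathcal L$ is generated by the $\mathcal L_\alpha$, $\alpha\in\Delta^\times$; (LT4) $\Lambda$ is generated by $\{\lambda:\mathcal L^\lambda\ne0\}$. Centreless = zero centre. Centroid $C=\{c\in\mathrm{End}_k\mathcal L:c[x,y]=[cx,y]=[x,cy]\}$; for $\lambda\in\Lambda$ put $C^\lambda=\{c\in C:c(\mathcal L^\mu)\subseteq\mathcal L^{\mu+\lambda}\ \forall\mu\in\Lambda\}$; then $C=\bigoplus_\lambda C^\lambda$ and $\Gamma(\mathcal L):=\{\lambda:C^\lambda\ne0\}$ is a subgroup of $\Lambda$. An isotopy from $\mathcal L$ onto $\mathcal L'$ is an algebra isomorphism $\varphi$ such that $\varphi(\mathcal L_\alpha^\lambda)=\mathcal L'^{\,\varphi_e(\lambda)+\varphi_s(\alpha)}_{\varphi_r(\alpha)}$ for all $\alpha\in Q$, $\lambda\in\Lambda$, where $\varphi_r:Q\to Q'=\mathrm{span}_{\mathbb Z}\Delta'$ and $\varphi_e:\Lambda\to\Lambda'$ are group isomorphisms and $\varphi_s:Q\to\Lambda'$ is a group homomorphism; $\mathcal L$ and $\mathcal L'$ are isotopic if such an isotopy exists. *)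

theory Defs
  imports "HOL-Analysis.Analysis" "HOL-Algebra.Coset"
begin

definition zmult :: "int \<Rightarrow> 'g::ab_group_add \<Rightarrow> 'g" where
  "zmult n x = (if 0 \<le> n then (\<Sum>_\<in>{..<nat n}. x) else - (\<Sum>_\<in>{..<nat (- n)}. x))"

definition fg_free_abelian :: "'g::ab_group_add itself \<Rightarrow> bool" where
  "fg_free_abelian _ \<longleftrightarrow> (\<exists>bs::'g list. \<forall>x::'g. \<exists>!c::int list.
      length c = length bs \<and> x = (\<Sum>i<length bs. zmult (c ! i) (bs ! i)))"

definition addgrp :: "'g::ab_group_add itself \<Rightarrow> 'g monoid" where
  "addgrp _ = \<lparr>carrier = UNIV, mult = (+), one = 0\<rparr>"

definition coroot_pair :: "'v::euclidean_space \<Rightarrow> 'v \<Rightarrow> real" where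
  "coroot_pair \<beta> \<alpha> = 2 * (\<beta> \<bullet> \<alpha>) / (\<alpha> \<bullet> \<alpha>)"

text \<open>Integer value of the pairing <beta, alpha^vee> (an integer whenever beta lies in the root lattice).\<close>
definition coroot_int :: "'v::euclidean_space \<Rightarrow> 'v \<Rightarrow> int" where
  "coroot_int \<beta> \<alpha> = \<lfloor>coroot_pair \<beta> \<alpha>\<rfloor>"

text \<open>A (possibly non-reduced) root system in the usual sense, in a Euclidean space.\<close>
definition root_system :: "'v::euclidean_space set \<Rightarrow> bool" where
  "root_system R \<longleftrightarrow> finite R \<and> 0 \<notin> R \<and> span R = UNIV \<and>
     (\<forall>\<alpha>\<in>R. \<forall>\<beta>\<in>R. coroot_pair \<beta> \<alpha> \<in> \<int> \<and> \<beta> - coroot_pair \<beta> \<alpha> *\<^sub>R \<alpha> \<in> R)"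

definition irreducible_root_system :: "'v::euclidean_space set \<Rightarrow> bool" where
  "irreducible_root_system R \<longleftrightarrow> root_system R \<and> R \<noteq> {} \<and>
     (\<forall>A B. A \<union> B = R \<longrightarrow> A \<inter> B = {} \<longrightarrow> (\<forall>a\<in>A. \<forall>b\<in>B. a \<bullet> b = 0) \<longrightarrow> A = {} \<or> B = {})"

definition irred_finite_root_system :: "'v::euclidean_space set \<Rightarrow> bool" where
  "irred_finite_root_system \<Delta> \<longleftrightarrow> finite \<Delta> \<and> 0 \<in> \<Delta> \<and> irreducible_root_system (\<Delta> - {0})"

definition root_lattice :: "'v::euclidean_space set \<Rightarrow> 'v set" where
  "root_lattice \<Delta> = {x. \<exists>c::'v \<Rightarrow> int. x = (\<Sum>\<alpha>\<in>\<Delta>. real_of_int (c \<alpha>) *\<^sub>R \<alpha>)}"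

definition indivisible_roots :: "'v::euclidean_space set \<Rightarrow> 'v set" where
  "indivisible_roots \<Delta> = (\<Delta> - {0}) - (\<lambda>x. 2 *\<^sub>R x) ` (\<Delta> - {0})"

definition lie_algebra :: "('k::field \<Rightarrow> 'L::ab_group_add \<Rightarrow> 'L) \<Rightarrow> ('L \<Rightarrow> 'L \<Rightarrow> 'L) \<Rightarrow> bool" where
  "lie_algebra sc br \<longleftrightarrow> vector_space sc \<and>
     (\<forall>x y z. br (x + y) z = br x z + br y z) \<and>
     (\<forall>x y z. br x (y + z) = br x y + br x z) \<and>
     (\<forall>a x y. br (sc a x) y = sc a (br x y)) \<and>
     (\<forall>a x y. br x (sc a y) = sc a (br x y)) \<and>
     (\<forall>x. br x x = 0) \<and>
     (\<forall>x y z. br x (br y z) + br y (br z x) + br z (br x y) = 0)"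

definition centreless :: "('L::ab_group_add \<Rightarrow> 'L \<Rightarrow> 'L) \<Rightarrow> bool" where
  "centreless br \<longleftrightarrow> (\<forall>z. (\<forall>x. br z x = 0) \<longrightarrow> z = 0)"

definition lie_subalgebra :: "('k::field \<Rightarrow> 'L::ab_group_add \<Rightarrow> 'L) \<Rightarrow> ('L \<Rightarrow> 'L \<Rightarrow> 'L) \<Rightarrow> 'L set \<Rightarrow> bool" where
  "lie_subalgebra sc br S \<longleftrightarrow> module.subspace sc S \<and> (\<forall>x\<in>S. \<forall>y\<in>S. br x y \<in> S)"

definition add_subgroup :: "'g::ab_group_add set \<Rightarrow> bool" where
  "add_subgroup H \<longleftrightarrow> 0 \<in> H \<and> (\<forall>x\<in>H. \<forall>y\<in>H. x + y \<in> H) \<and> (\<forall>x\<in>H. - x \<in> H)"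

text \<open>G alpha lambda is the homogeneous space L_alpha^lambda.  L_alpha (sum over lambda)
  and L^lambda (sum over alpha) are given as sets of finite sums.\<close>
definition root_space :: "('v \<Rightarrow> 'g \<Rightarrow> 'L::ab_group_add set) \<Rightarrow> 'v \<Rightarrow> 'L set" where
  "root_space G \<alpha> = {x. \<exists>S f. finite S \<and> (\<forall>l\<in>S. f l \<in> G \<alpha> l) \<and> x = sum f S}"

definition degree_space :: "('v \<Rightarrow> 'g \<Rightarrow> 'L::ab_group_add set) \<Rightarrow> 'g \<Rightarrow> 'L set" where
  "degree_space G l = {x. \<exists>S f. finite S \<and> (\<forall>\<alpha>\<in>S. f \<alpha> \<in> G \<alpha> l) \<and> x = sum f S}"

definition lie_torus ::
  "('k::field_char_0 \<Rightarrow> 'L::ab_group_add \<Rightarrow> 'L) \<Rightarrow> ('L \<Rightarrow> 'L \<Rightarrow> 'L) \<Rightarrow>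
   'v::euclidean_space set \<Rightarrow> ('v \<Rightarrow> 'g::ab_group_add \<Rightarrow> 'L set) \<Rightarrow> bool" where
  "lie_torus sc br \<Delta> G \<longleftrightarrow>
     lie_algebra sc br \<and> irred_finite_root_system \<Delta> \<and> fg_free_abelian TYPE('g) \<and>
     \<comment> \<open>Q x Lambda-grading\<close>
     (\<forall>\<alpha> l. module.subspace sc (G \<alpha> l)) \<and>
     (\<forall>\<alpha> l. \<alpha> \<notin> root_lattice \<Delta> \<longrightarrow> G \<alpha> l = {0}) \<and>
     (\<forall>x. \<exists>!c::'v \<Rightarrow> 'g \<Rightarrow> 'L. finite {p. c (fst p) (snd p) \<noteq> 0} \<and>
          (\<forall>\<alpha> l. c \<alpha> l \<in> G \<alpha> l) \<and>
          x = (\<Sum>p\<in>{p. c (fst p) (snd p) \<noteq> 0}. c (fst p) (snd p))) \<and>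
     (\<forall>\<alpha> \<beta> l m x y. x \<in> G \<alpha> l \<longrightarrow> y \<in> G \<beta> m \<longrightarrow> br x y \<in> G (\<alpha> + \<beta>) (l + m)) \<and>
     \<comment> \<open>(LT1)\<close>
     {\<alpha>. root_space G \<alpha> \<noteq> {0}} = \<Delta> \<and>
     \<comment> \<open>(LT2)(i)\<close>
     (\<forall>\<alpha>\<in>indivisible_roots \<Delta>. G \<alpha> 0 \<noteq> {0}) \<and>
     \<comment> \<open>(LT2)(ii)\<close>
     (\<forall>\<alpha>\<in>\<Delta> - {0}. \<forall>l. G \<alpha> l \<noteq> {0} \<longrightarrow>
        (\<exists>e\<in>G \<alpha> l. \<exists>f\<in>G (- \<alpha>) (- l).
           G \<alpha> l = range (\<lambda>a. sc a e) \<and> G (- \<alpha>) (- l) = range (\<lambda>a. sc a f) \<and>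
           (\<forall>\<beta>\<in>root_lattice \<Delta>. \<forall>x\<in>root_space G \<beta>.
              br (br e f) x = sc (of_int (coroot_int \<beta> \<alpha>)) x))) \<and>
     \<comment> \<open>(LT3)\<close>
     (\<forall>S. lie_subalgebra sc br S \<longrightarrow> (\<Union>\<alpha>\<in>\<Delta> - {0}. root_space G \<alpha>) \<subseteq> S \<longrightarrow> S = UNIV) \<and>
     \<comment> \<open>(LT4)\<close>
     (\<forall>H. add_subgroup H \<longrightarrow> {l. degree_space G l \<noteq> {0}} \<subseteq> H \<longrightarrow> H = UNIV)"

definition centroid :: "('k::field \<Rightarrow> 'L::ab_group_add \<Rightarrow> 'L) \<Rightarrow> ('L \<Rightarrow> 'L \<Rightarrow> 'L) \<Rightarrow> ('L \<Rightarrow> 'L) set" where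
  "centroid sc br = {c. (\<forall>x y. c (x + y) = c x + c y) \<and> (\<forall>a x. c (sc a x) = sc a (c x)) \<and>
       (\<forall>x y. c (br x y) = br (c x) y \<and> c (br x y) = br x (c y))}"

definition centroid_deg ::
  "('k::field \<Rightarrow> 'L::ab_group_add \<Rightarrow> 'L) \<Rightarrow> ('L \<Rightarrow> 'L \<Rightarrow> 'L) \<Rightarrow> ('v \<Rightarrow> 'g::ab_group_add \<Rightarrow> 'L set) \<Rightarrow> 'g \<Rightarrow> ('L \<Rightarrow> 'L) set" where
  "centroid_deg sc br G l = {c \<in> centroid sc br. \<forall>m. c ` degree_space G m \<subseteq> degree_space G (m + l)}"

definition Gamma ::
  "('k::field \<Rightarrow> 'L::ab_group_add \<Rightarrow> 'L) \<Rightarrow> ('L \<Rightarrow> 'L \<Rightarrow> 'L) \<Rightarrow> ('v \<Rightarrow> 'g::ab_group_add \<Rightarrow> 'L set) \<Rightarrow> 'g set" where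
  "Gamma sc br G = {l. centroid_deg sc br G l \<noteq> {\<lambda>x. 0}}"

definition lie_isomorphism ::
  "('k::field \<Rightarrow> 'L::ab_group_add \<Rightarrow> 'L) \<Rightarrow> ('L \<Rightarrow> 'L \<Rightarrow> 'L) \<Rightarrow>
   ('k \<Rightarrow> 'M::ab_group_add \<Rightarrow> 'M) \<Rightarrow> ('M \<Rightarrow> 'M \<Rightarrow> 'M) \<Rightarrow> ('L \<Rightarrow> 'M) \<Rightarrow> bool" where
  "lie_isomorphism sc br sc' br' \<phi> \<longleftrightarrow> bij \<phi> \<and>
     (\<forall>x y. \<phi> (x + y) = \<phi> x + \<phi> y) \<and> (\<forall>a x. \<phi> (sc a x) = sc' a (\<phi> x)) \<and>
     (\<forall>x y. \<phi> (br x y) = br' (\<phi> x) (\<phi> y))"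

definition isotopic ::
  "('k::field \<Rightarrow> 'L::ab_group_add \<Rightarrow> 'L) \<Rightarrow> ('L \<Rightarrow> 'L \<Rightarrow> 'L) \<Rightarrow>
   'v::euclidean_space set \<Rightarrow> ('v \<Rightarrow> 'g::ab_group_add \<Rightarrow> 'L set) \<Rightarrow>
   ('k \<Rightarrow> 'M::ab_group_add \<Rightarrow> 'M) \<Rightarrow> ('M \<Rightarrow> 'M \<Rightarrow> 'M) \<Rightarrow>
   'w::euclidean_space set \<Rightarrow> ('w \<Rightarrow> 'h::ab_group_add \<Rightarrow> 'M set) \<Rightarrow> bool" where
  "isotopic sc br \<Delta> G sc' br' \<Delta>' G' \<longleftrightarrow>
     (\<exists>\<phi> \<phi>r \<phi>e \<phi>s. lie_isomorphism sc br sc' br' \<phi> \<and>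
        bij_betw \<phi>r (root_lattice \<Delta>) (root_lattice \<Delta>') \<and>
        (\<forall>\<alpha>\<in>root_lattice \<Delta>. \<forall>\<beta>\<in>root_lattice \<Delta>. \<phi>r (\<alpha> + \<beta>) = \<phi>r \<alpha> + \<phi>r \<beta>) \<and>
        bij \<phi>e \<and> (\<forall>l m. \<phi>e (l + m) = \<phi>e l + \<phi>e m) \<and>
        (\<forall>\<alpha>\<in>root_lattice \<Delta>. \<forall>\<beta>\<in>root_lattice \<Delta>. \<phi>s (\<alpha> + \<beta>) = \<phi>s \<alpha> + \<phi>s \<beta>) \<and>
        (\<forall>\<alpha>\<in>root_lattice \<Delta>. \<forall>l. \<phi> ` G \<alpha> l = G' (\<phi>r \<alpha>) (\<phi>e l + \<phi>s \<alpha>)))"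

end

theory Submission
  imports Defs
begin

text \<open>
  A centroid element of degree \<open>\<lambda>\<close> maps each \<open>L\<^sub>\<alpha>\<^sup>\<mu>\<close> into \<open>L\<^sub>\<alpha>\<^sup>\<mu>\<^sup>+\<^sup>\<lambda>\<close>: it keeps the root degree
  because it commutes with \<open>ad h\<close> for the elements \<open>h = [e,f]\<close> of (LT2), whose eigenvalues
  \<open>\<langle>\<beta>,\<gamma>\<^sup>\<or>\<rangle>\<close> on \<open>L\<^sub>\<beta>\<close> separate the points \<open>\<beta>\<close> of the root lattice.  Hence conjugation by an
  isotopy \<open>\<phi>\<close> turns a nonzero centroid element of degree \<open>\<lambda>\<close> into one of degree \<open>\<phi>\<^sub>e(\<lambda>)\<close>, the
  shift \<open>\<phi>\<^sub>s\<close> cancelling out.  Applied to \<open>\<phi>\<close> and to its inverse this gives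
  \<open>\<phi>\<^sub>e(\<Gamma>(L)) = \<Gamma>(L')\<close>, so \<open>\<phi>\<^sub>e\<close> induces the isomorphism of the quotients.
\<close>

lemma additive_inv:
  assumes "Modules.additive f" and "bij f"
  shows "Modules.additive (inv_into UNIV f)"
proof
  fix x y
  have "f (inv_into UNIV f x + inv_into UNIV f y) = x + y"
    using assms by (simp add: additive.add bij_is_surj surj_f_inv_f)
  then show "inv_into UNIV f (x + y) = inv_into UNIV f x + inv_into UNIV f y"
    using assms by (metis bij_is_inj inv_f_f)
qed

lemma addgrp_Mod_iso:
  fixes f :: "'g::ab_group_add \<Rightarrow> 'h::ab_group_add"
  assumes "bij f" and "Modules.additive f" and "f ` A = B"
  shows "addgrp TYPE('g) Mod A \<cong> addgrp TYPE('h) Mod B"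
proof (rule is_isoI)
  have f_add: "f (x + y) = f x + f y" for x y
    using \<open>Modules.additive f\<close> by (rule additive.add)
  have coset: "f ` (A #>\<^bsub>addgrp TYPE('g)\<^esub> a) = B #>\<^bsub>addgrp TYPE('h)\<^esub> f a" for a
    using \<open>f ` A = B\<close> by (force simp: r_coset_def addgrp_def f_add)
  have carrier_Mod: "carrier (addgrp TYPE('g') Mod C) = range (\<lambda>a. C #>\<^bsub>addgrp TYPE('g')\<^esub> a)"
    for C :: "'g'::ab_group_add set"
    by (auto simp: FactGroup_def RCOSETS_def addgrp_def)
  have bij: "bij_betw ((`) f) (carrier (addgrp TYPE('g) Mod A)) (carrier (addgrp TYPE('h) Mod B))"
  proof (rule bij_betw_imageI)
    show "inj_on ((`) f) (carrier (addgrp TYPE('g) Mod A))"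
      using bij_is_inj[OF \<open>bij f\<close>] by (intro inj_onI) (simp add: inj_image_eq_iff)
    have "range (\<lambda>a. B #>\<^bsub>addgrp TYPE('h)\<^esub> f a) = range (\<lambda>b. B #>\<^bsub>addgrp TYPE('h)\<^esub> b)"
      using \<open>bij f\<close> by (metis bij_is_surj image_image)
    then show "(`) f ` carrier (addgrp TYPE('g) Mod A) = carrier (addgrp TYPE('h) Mod B)"
      by (simp add: carrier_Mod image_image coset)
  qed
  have "f ` (X <#>\<^bsub>addgrp TYPE('g)\<^esub> Y) = f ` X <#>\<^bsub>addgrp TYPE('h)\<^esub> f ` Y" for X Y
    by (simp add: set_mult_def image_UN addgrp_def f_add)
  then have "(`) f \<in> hom (addgrp TYPE('g) Mod A) (addgrp TYPE('h) Mod B)"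
    using bij_betw_apply[OF bij] by (intro homI) (simp_all add: FactGroup_def)
  with bij show "(`) f \<in> iso (addgrp TYPE('g) Mod A) (addgrp TYPE('h) Mod B)"
    by (simp add: iso_def)
qed

lemma lie_algebra_additive_left: "lie_algebra sc br \<Longrightarrow> Modules.additive (\<lambda>x. br x y)"
  by unfold_locales (simp add: lie_algebra_def)

lemma lie_algebra_additive_right: "lie_algebra sc br \<Longrightarrow> Modules.additive (br x)"
  by unfold_locales (simp add: lie_algebra_def)

lemma lie_algebra_module: "lie_algebra sc br \<Longrightarrow> module sc"
  by (simp add: lie_algebra_def module_iff_vector_space)

lemma lie_isomorphism_inv:
  assumes "lie_isomorphism sc br sc' br' \<phi>"
  shows "lie_isomorphism sc' br' sc br (inv_into UNIV \<phi>)"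
proof -
  have "bij \<phi>" and add: "\<And>x y. \<phi> (x + y) = \<phi> x + \<phi> y"
    and scale: "\<And>a x. \<phi> (sc a x) = sc' a (\<phi> x)" and bracket: "\<And>x y. \<phi> (br x y) = br' (\<phi> x) (\<phi> y)"
    using assms by (auto simp: lie_isomorphism_def)
  have \<phi>_inv: "\<phi> (inv_into UNIV \<phi> y) = y" for y
    using \<open>bij \<phi>\<close> by (simp add: bij_is_surj surj_f_inv_f)
  have inv_eq: "inv_into UNIV \<phi> y = x \<longleftrightarrow> y = \<phi> x" for x y
    using bij_inv_eq_iff[OF \<open>bij \<phi>\<close>] by metis
  show ?thesis
    unfolding lie_isomorphism_def
    by (simp add: inv_eq add scale bracket \<phi>_inv bij_imp_bij_inv[OF \<open>bij \<phi>\<close>])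
qed

lemma lie_isomorphism_additive: "lie_isomorphism sc br sc' br' \<phi> \<Longrightarrow> Modules.additive \<phi>"
  by unfold_locales (simp add: lie_isomorphism_def)

section \<open>Root lattices\<close>

lemma coroot_pair_root_lattice_Ints:
  assumes "irred_finite_root_system \<Delta>" and "\<beta> \<in> root_lattice \<Delta>" and "\<gamma> \<in> \<Delta> - {0}"
  shows "coroot_pair \<beta> \<gamma> \<in> \<int>"
proof -
  obtain c where \<beta>: "\<beta> = (\<Sum>\<delta>\<in>\<Delta>. real_of_int (c \<delta>) *\<^sub>R \<delta>)"
    using assms(2) unfolding root_lattice_def by blast
  have "coroot_pair \<delta> \<gamma> \<in> \<int>" if "\<delta> \<in> \<Delta>" for \<delta>
    using assms(1,3) that
    by (cases "\<delta> = 0")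
       (auto simp: coroot_pair_def irred_finite_root_system_def irreducible_root_system_def
          root_system_def)
  moreover have "coroot_pair \<beta> \<gamma> = (\<Sum>\<delta>\<in>\<Delta>. real_of_int (c \<delta>) * coroot_pair \<delta> \<gamma>)"
    unfolding \<beta> coroot_pair_def
    by (simp add: inner_sum_left sum_distrib_left sum_divide_distrib algebra_simps)
  ultimately show ?thesis
    by (simp add: Ints_sum Ints_mult)
qed

lemma coroot_int_root_lattice:
  assumes "irred_finite_root_system \<Delta>" and "\<beta> \<in> root_lattice \<Delta>" and "\<gamma> \<in> \<Delta> - {0}"
  shows "real_of_int (coroot_int \<beta> \<gamma>) = coroot_pair \<beta> \<gamma>"
  using coroot_pair_root_lattice_Ints[OF assms] by (auto simp: coroot_int_def elim: Ints_cases)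

lemma root_lattice_eq_if_coroot_int_eq:
  assumes "irred_finite_root_system \<Delta>" and "\<alpha> \<in> root_lattice \<Delta>" and "\<beta> \<in> root_lattice \<Delta>"
    and "\<And>\<gamma>. \<gamma> \<in> \<Delta> - {0} \<Longrightarrow> coroot_int \<beta> \<gamma> = coroot_int \<alpha> \<gamma>"
  shows "\<beta> = \<alpha>"
proof -
  have "orthogonal (\<beta> - \<alpha>) \<gamma>" if "\<gamma> \<in> \<Delta> - {0}" for \<gamma>
  proof -
    have "coroot_pair \<beta> \<gamma> = coroot_pair \<alpha> \<gamma>"
      using assms that by (metis coroot_int_root_lattice)
    with that show ?thesis
      by (simp add: coroot_pair_def orthogonal_def inner_diff_left)
  qed
  moreover have "span (\<Delta> - {0}) = UNIV"
    using assms(1)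
    by (simp add: irred_finite_root_system_def irreducible_root_system_def root_system_def)
  ultimately have "orthogonal (\<beta> - \<alpha>) (\<beta> - \<alpha>)"
    by (metis UNIV_I orthogonal_to_span)
  then show ?thesis
    by (simp add: orthogonal_def)
qed

section \<open>Lie tori\<close>

lemma lie_torus_lie_algebra: "lie_torus sc br \<Delta> G \<Longrightarrow> lie_algebra sc br"
  by (simp add: lie_torus_def)

lemma lie_torus_root_system: "lie_torus sc br \<Delta> G \<Longrightarrow> irred_finite_root_system \<Delta>"
  by (simp add: lie_torus_def)

lemma lie_torus_subspace: "lie_torus sc br \<Delta> G \<Longrightarrow> module.subspace sc (G \<alpha> l)"
  by (simp add: lie_torus_def)

lemma lie_torus_zero: "lie_torus sc br \<Delta> G \<Longrightarrow> 0 \<in> G \<alpha> l"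
  by (metis lie_torus_subspace lie_torus_lie_algebra lie_algebra_module module.subspace_0)

lemma lie_torus_scale: "lie_torus sc br \<Delta> G \<Longrightarrow> x \<in> G \<alpha> l \<Longrightarrow> sc a x \<in> G \<alpha> l"
  by (metis lie_torus_subspace lie_torus_lie_algebra lie_algebra_module module.subspace_scale)

lemma lie_torus_outside_root_lattice:
  "lie_torus sc br \<Delta> G \<Longrightarrow> \<alpha> \<notin> root_lattice \<Delta> \<Longrightarrow> G \<alpha> l = {0}"
  by (simp add: lie_torus_def)

lemma lie_torus_decomposition_unique:
  assumes "lie_torus sc br \<Delta> G"
    and "finite {p. c (fst p) (snd p) \<noteq> 0}" and "\<forall>\<alpha> l. c \<alpha> l \<in> G \<alpha> l"
    and "finite {p. c' (fst p) (snd p) \<noteq> 0}" and "\<forall>\<alpha> l. c' \<alpha> l \<in> G \<alpha> l"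
    and "(\<Sum>p\<in>{p. c (fst p) (snd p) \<noteq> 0}. c (fst p) (snd p)) =
      (\<Sum>p\<in>{p. c' (fst p) (snd p) \<noteq> 0}. c' (fst p) (snd p))"
  shows "c = c'"
proof -
  have "\<forall>x. \<exists>!c. finite {p. c (fst p) (snd p) \<noteq> 0} \<and> (\<forall>\<alpha> l. c \<alpha> l \<in> G \<alpha> l) \<and>
      x = (\<Sum>p\<in>{p. c (fst p) (snd p) \<noteq> 0}. c (fst p) (snd p))"
    using assms(1) unfolding lie_torus_def by (elim conjE) assumption
  then show ?thesis
    using assms(2-) by blast
qed

lemma lie_torus_homogeneous_sum_eq_0:
  assumes lt: "lie_torus sc br \<Delta> G" and "finite S"
    and f: "\<And>\<beta>. \<beta> \<in> S \<Longrightarrow> f \<beta> \<in> G \<beta> n" and "sum f S = 0" and "\<beta> \<in> S"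
  shows "f \<beta> = 0"
proof -
  define c where "c \<beta>' m = (if m = n \<and> \<beta>' \<in> S then f \<beta>' else 0)" for \<beta>' m
  have supp: "{p. c (fst p) (snd p) \<noteq> 0} \<subseteq> S \<times> {n}"
    by (auto simp: c_def split: if_splits)
  have "(\<Sum>p\<in>{p. c (fst p) (snd p) \<noteq> 0}. c (fst p) (snd p)) = (\<Sum>p\<in>S \<times> {n}. c (fst p) (snd p))"
    using \<open>finite S\<close> supp by (intro sum.mono_neutral_left) auto
  also have "\<dots> = sum f S"
  proof -
    have "S \<times> {n} = (\<lambda>\<beta>. (\<beta>, n)) ` S"
      by auto
    then show ?thesis
      by (simp add: sum.reindex inj_on_def c_def)
  qed
  finally have sum_c: "(\<Sum>p\<in>{p. c (fst p) (snd p) \<noteq> 0}. c (fst p) (snd p)) = 0"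
    using \<open>sum f S = 0\<close> by simp
  have "c = (\<lambda>_ _. 0)"
  proof (rule lie_torus_decomposition_unique[OF lt])
    show "finite {p. c (fst p) (snd p) \<noteq> 0}"
      using \<open>finite S\<close> supp finite_subset by blast
    show "\<forall>\<alpha> l. c \<alpha> l \<in> G \<alpha> l"
      using f lie_torus_zero[OF lt] by (simp add: c_def)
  qed (use sum_c lie_torus_zero[OF lt] in simp_all)
  then show ?thesis
    using \<open>\<beta> \<in> S\<close> by (metis c_def)
qed

lemma lie_torus_toral_element:
  assumes lt: "lie_torus sc br \<Delta> G" and "\<gamma> \<in> \<Delta> - {0}"
  obtains h where "\<And>\<beta> x. \<beta> \<in> root_lattice \<Delta> \<Longrightarrow> x \<in> root_space G \<beta> \<Longrightarrow>
      br h x = sc (of_int (coroot_int \<beta> \<gamma>)) x"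
proof -
  have "{\<alpha>. root_space G \<alpha> \<noteq> {0}} = \<Delta>"
    using lt by (simp add: lie_torus_def)
  with \<open>\<gamma> \<in> \<Delta> - {0}\<close> have "root_space G \<gamma> \<noteq> {0}"
    by blast
  moreover have "0 \<in> root_space G \<gamma>"
    unfolding root_space_def by (intro CollectI exI[of _ "{}"]) auto
  ultimately obtain x where "x \<in> root_space G \<gamma>" "x \<noteq> 0"
    by blast
  then obtain S f where "\<forall>l\<in>S. f l \<in> G \<gamma> l" "sum f S \<noteq> 0"
    unfolding root_space_def by blast
  then obtain l where "G \<gamma> l \<noteq> {0}"
    by (metis singletonD sum.neutral)
  moreover have "\<forall>\<alpha>\<in>\<Delta> - {0}. \<forall>l. G \<alpha> l \<noteq> {0} \<longrightarrow> (\<exists>e\<in>G \<alpha> l. \<exists>f\<in>G (- \<alpha>) (- l).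
      G \<alpha> l = range (\<lambda>a. sc a e) \<and> G (- \<alpha>) (- l) = range (\<lambda>a. sc a f) \<and>
      (\<forall>\<beta>\<in>root_lattice \<Delta>. \<forall>x\<in>root_space G \<beta>. br (br e f) x = sc (of_int (coroot_int \<beta> \<alpha>)) x))"
    using lt unfolding lie_torus_def by (elim conjE) assumption
  ultimately obtain e f where
    "\<forall>\<beta>\<in>root_lattice \<Delta>. \<forall>x\<in>root_space G \<beta>. br (br e f) x = sc (of_int (coroot_int \<beta> \<gamma>)) x"
    using \<open>\<gamma> \<in> \<Delta> - {0}\<close> by (meson bspec)
  then show ?thesis
    using that by blast
qed

lemma in_root_space: "x \<in> G \<beta> l \<Longrightarrow> x \<in> root_space G \<beta>"
  unfolding root_space_def by (intro CollectI exI[of _ "{l}"] exI[of _ "\<lambda>_. x"]) auto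

lemma in_degree_space: "x \<in> G \<beta> l \<Longrightarrow> x \<in> degree_space G l"
  unfolding degree_space_def by (intro CollectI exI[of _ "{\<beta>}"] exI[of _ "\<lambda>_. x"]) auto

lemma degree_space_image_subset:
  assumes "Modules.additive c" and "\<And>\<alpha> m x. x \<in> G \<alpha> m \<Longrightarrow> c x \<in> G \<alpha> (m + l)"
  shows "c ` degree_space G m \<subseteq> degree_space G (m + l)"
proof
  fix y assume "y \<in> c ` degree_space G m"
  then obtain S f where "finite S" "\<forall>\<alpha>\<in>S. f \<alpha> \<in> G \<alpha> m" "y = c (sum f S)"
    unfolding degree_space_def by blast
  moreover have "c (sum f S) = (\<Sum>\<alpha>\<in>S. c (f \<alpha>))"
    using \<open>Modules.additive c\<close> by (rule additive.sum)
  ultimately show "y \<in> degree_space G (m + l)"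
    unfolding degree_space_def using assms(2) by (auto intro!: exI[of _ S] exI[of _ "c \<circ> f"])
qed

lemma lie_torus_eigenvector_components:
  assumes lt: "lie_torus sc br \<Delta> G" and "finite S" and f: "\<And>\<delta>. \<delta> \<in> S \<Longrightarrow> f \<delta> \<in> G \<delta> n"
    and h: "\<And>\<delta> x. \<delta> \<in> root_lattice \<Delta> \<Longrightarrow> x \<in> root_space G \<delta> \<Longrightarrow> br h x = sc (\<kappa> \<delta>) x"
    and eigen: "br h (sum f S) = sc k (sum f S)"
    and "\<beta> \<in> S" and "f \<beta> \<noteq> 0"
  shows "\<kappa> \<beta> = k"
proof -
  interpret module sc
    using lt by (metis lie_torus_lie_algebra lie_algebra_module)
  interpret vector_space sc
    by (simp add: module_iff_vector_space[symmetric] module_axioms)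
  have ad_h: "Modules.additive (br h)"
    using lt by (metis lie_torus_lie_algebra lie_algebra_additive_right)
  have eigen_f: "br h (f \<delta>) = sc (\<kappa> \<delta>) (f \<delta>)" if "\<delta> \<in> S" for \<delta>
  proof (cases "\<delta> \<in> root_lattice \<Delta>")
    case True
    then show ?thesis
      using h in_root_space[of "f \<delta>" G \<delta> n] f[OF that] by blast
  next
    case False
    then show ?thesis
      using lie_torus_outside_root_lattice[OF lt] f[OF that] by (simp add: additive.zero[OF ad_h])
  qed
  have "sc k (sum f S) = (\<Sum>\<delta>\<in>S. br h (f \<delta>))"
    using eigen by (simp add: additive.sum[OF ad_h])
  also have "\<dots> = (\<Sum>\<delta>\<in>S. sc (\<kappa> \<delta>) (f \<delta>))"
    using eigen_f by (rule sum.cong[OF refl])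
  finally have "sc k (sum f S) = (\<Sum>\<delta>\<in>S. sc (\<kappa> \<delta>) (f \<delta>))" .
  then have "(\<Sum>\<delta>\<in>S. sc (\<kappa> \<delta> - k) (f \<delta>)) = 0"
    by (simp add: scale_left_diff_distrib scale_sum_right sum_subtractf)
  moreover have "sc (\<kappa> \<delta> - k) (f \<delta>) \<in> G \<delta> n" if "\<delta> \<in> S" for \<delta>
    using lie_torus_scale[OF lt f[OF that]] .
  ultimately have "sc (\<kappa> \<beta> - k) (f \<beta>) = 0"
    using lie_torus_homogeneous_sum_eq_0[OF lt \<open>finite S\<close>, where f = "\<lambda>\<delta>. sc (\<kappa> \<delta> - k) (f \<delta>)"]
      \<open>\<beta> \<in> S\<close> by blast
  then show ?thesis
    using \<open>f \<beta> \<noteq> 0\<close> by simp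
qed

section \<open>The centroid\<close>

lemma centroid_additive: "c \<in> centroid sc br \<Longrightarrow> Modules.additive c"
  by unfold_locales (simp add: centroid_def)

lemma zero_in_centroid_deg:
  assumes "lie_algebra sc br"
  shows "(\<lambda>x. 0) \<in> centroid_deg sc br G l"
proof -
  have "0 \<in> degree_space G m" for m
    unfolding degree_space_def by (intro CollectI exI[of _ "{}"]) auto
  moreover have "sc a 0 = 0" for a
    using assms by (metis lie_algebra_module module.scale_zero_right)
  moreover have "br 0 y = 0" "br y 0 = 0" for y
    using assms by (metis lie_algebra_additive_left lie_algebra_additive_right additive.zero)+
  ultimately show ?thesis
    by (auto simp: centroid_deg_def centroid_def)
qed

lemma mem_Gamma_iff:
  "lie_algebra sc br \<Longrightarrow> l \<in> Gamma sc br G \<longleftrightarrow> (\<exists>c\<in>centroid_deg sc br G l. c \<noteq> (\<lambda>x. 0))"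
  unfolding Gamma_def using zero_in_centroid_deg by blast

lemma centroid_deg_homogeneous:
  fixes sc :: "'k::field_char_0 \<Rightarrow> 'L::ab_group_add \<Rightarrow> 'L"
  assumes lt: "lie_torus sc br \<Delta> G" and c: "c \<in> centroid_deg sc br G l" and x: "x \<in> G \<alpha> m"
  shows "c x \<in> G \<alpha> (m + l)"
proof (cases "\<alpha> \<in> root_lattice \<Delta>")
  case False
  then have "x = 0"
    using x lie_torus_outside_root_lattice[OF lt] by blast
  moreover have "c 0 = 0"
    using c centroid_additive additive.zero unfolding centroid_deg_def by blast
  ultimately show ?thesis
    using lie_torus_zero[OF lt] by simp
next
  case \<alpha>: True
  have c_add: "c (y + z) = c y + c z" and c_scale: "c (sc a y) = sc a (c y)"
    and c_bracket: "c (br y z) = br y (c z)" for a y z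
    using c unfolding centroid_deg_def centroid_def by blast+
  have "c x \<in> degree_space G (m + l)"
    using c in_degree_space[of x G \<alpha> m, OF x] unfolding centroid_deg_def by blast
  then obtain S f where S: "finite S" "\<And>\<beta>. \<beta> \<in> S \<Longrightarrow> f \<beta> \<in> G \<beta> (m + l)" "c x = sum f S"
    unfolding degree_space_def by blast
  have "\<beta> = \<alpha>" if "\<beta> \<in> S" "f \<beta> \<noteq> 0" for \<beta>
  proof (rule root_lattice_eq_if_coroot_int_eq[OF lie_torus_root_system[OF lt] \<alpha>])
    show "\<beta> \<in> root_lattice \<Delta>"
      using lie_torus_outside_root_lattice[OF lt] S(2) that by blast
    fix \<gamma> assume "\<gamma> \<in> \<Delta> - {0}"
    then obtain h where h: "\<And>\<delta> y. \<delta> \<in> root_lattice \<Delta> \<Longrightarrow> y \<in> root_space G \<delta> \<Longrightarrow>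
        br h y = sc (of_int (coroot_int \<delta> \<gamma>)) y"
      using lt lie_torus_toral_element by blast
    have "br h (c x) = c (br h x)"
      by (simp add: c_bracket)
    also have "\<dots> = sc (of_int (coroot_int \<alpha> \<gamma>)) (c x)"
      using h[OF \<alpha> in_root_space[of x G \<alpha> m, OF x]] by (simp add: c_scale)
    finally have "br h (sum f S) = sc (of_int (coroot_int \<alpha> \<gamma>)) (sum f S)"
      by (simp add: S(3))
    then have "(of_int (coroot_int \<beta> \<gamma>) :: 'k) = of_int (coroot_int \<alpha> \<gamma>)"
      using lie_torus_eigenvector_components[OF lt S(1,2), where \<kappa> = "\<lambda>\<delta>. of_int (coroot_int \<delta> \<gamma>)"]
        h that by blast
    then show "coroot_int \<beta> \<gamma> = coroot_int \<alpha> \<gamma>"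
      by simp
  qed
  then have "c x = (\<Sum>\<beta>\<in>S. if \<beta> = \<alpha> then f \<alpha> else 0)"
    unfolding S(3) by (intro sum.cong) auto
  then show ?thesis
    using S lie_torus_zero[OF lt] by (simp add: sum.delta)
qed

lemma centroid_deg_iff:
  assumes "lie_torus sc br \<Delta> G"
  shows "c \<in> centroid_deg sc br G l \<longleftrightarrow>
    c \<in> centroid sc br \<and> (\<forall>\<alpha> m x. x \<in> G \<alpha> m \<longrightarrow> c x \<in> G \<alpha> (m + l))"
proof
  assume "c \<in> centroid_deg sc br G l"
  then show "c \<in> centroid sc br \<and> (\<forall>\<alpha> m x. x \<in> G \<alpha> m \<longrightarrow> c x \<in> G \<alpha> (m + l))"
    using centroid_deg_homogeneous[OF assms] unfolding centroid_deg_def by blast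
next
  assume "c \<in> centroid sc br \<and> (\<forall>\<alpha> m x. x \<in> G \<alpha> m \<longrightarrow> c x \<in> G \<alpha> (m + l))"
  then show "c \<in> centroid_deg sc br G l"
    unfolding centroid_deg_def using degree_space_image_subset centroid_additive by blast
qed

lemma centroid_conj:
  assumes iso: "lie_isomorphism sc br sc' br' \<phi>" and c: "c \<in> centroid sc br"
  shows "\<phi> \<circ> c \<circ> inv_into UNIV \<phi> \<in> centroid sc' br'"
proof -
  have \<phi>: "\<phi> (x + y) = \<phi> x + \<phi> y" "\<phi> (sc a x) = sc' a (\<phi> x)" "\<phi> (br x y) = br' (\<phi> x) (\<phi> y)"
    and \<phi>_inv: "inv_into UNIV \<phi> (x' + y') = inv_into UNIV \<phi> x' + inv_into UNIV \<phi> y'"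
      "inv_into UNIV \<phi> (sc' a x') = sc a (inv_into UNIV \<phi> x')"
      "inv_into UNIV \<phi> (br' x' y') = br (inv_into UNIV \<phi> x') (inv_into UNIV \<phi> y')"
      "\<phi> (inv_into UNIV \<phi> x') = x'"
    for a x y x' y'
    using iso lie_isomorphism_inv[OF iso]
    by (simp_all add: lie_isomorphism_def bij_is_surj surj_f_inv_f)
  have c_add: "c (x + y) = c x + c y" and c_scale: "c (sc a x) = sc a (c x)"
    and c_left: "c (br x y) = br (c x) y" and c_right: "c (br x y) = br x (c y)" for a x y
    using c unfolding centroid_def by blast+
  have "(\<phi> \<circ> c \<circ> inv_into UNIV \<phi>) (br' x y) = br' ((\<phi> \<circ> c \<circ> inv_into UNIV \<phi>) x) y" for x y
    by (simp add: \<phi> \<phi>_inv c_left)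
  moreover have "(\<phi> \<circ> c \<circ> inv_into UNIV \<phi>) (br' x y) = br' x ((\<phi> \<circ> c \<circ> inv_into UNIV \<phi>) y)" for x y
    by (simp add: \<phi> \<phi>_inv c_right)
  ultimately show ?thesis
    unfolding centroid_def by (simp add: \<phi> \<phi>_inv c_add c_scale)
qed

section \<open>Isotopies\<close>

text \<open>
  The data of an isotopy without the additivity of \<open>\<phi>\<^sub>r\<close> and \<open>\<phi>\<^sub>s\<close>, which the argument never
  uses; unlike the full data, it is preserved by passing to inverses without further work.
\<close>
definition weak_isotopy ::
  "('k::field \<Rightarrow> 'L::ab_group_add \<Rightarrow> 'L) \<Rightarrow> ('L \<Rightarrow> 'L \<Rightarrow> 'L) \<Rightarrow>
   'v::euclidean_space set \<Rightarrow> ('v \<Rightarrow> 'g::ab_group_add \<Rightarrow> 'L set) \<Rightarrow>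
   ('k \<Rightarrow> 'M::ab_group_add \<Rightarrow> 'M) \<Rightarrow> ('M \<Rightarrow> 'M \<Rightarrow> 'M) \<Rightarrow>
   'w::euclidean_space set \<Rightarrow> ('w \<Rightarrow> 'h::ab_group_add \<Rightarrow> 'M set) \<Rightarrow>
   ('L \<Rightarrow> 'M) \<Rightarrow> ('v \<Rightarrow> 'w) \<Rightarrow> ('g \<Rightarrow> 'h) \<Rightarrow> ('v \<Rightarrow> 'h) \<Rightarrow> bool" where
  "weak_isotopy sc br \<Delta> G sc' br' \<Delta>' G' \<phi> \<phi>r \<phi>e \<phi>s \<longleftrightarrow>
     lie_isomorphism sc br sc' br' \<phi> \<and> bij_betw \<phi>r (root_lattice \<Delta>) (root_lattice \<Delta>') \<and>
     bij \<phi>e \<and> Modules.additive \<phi>e \<and>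
     (\<forall>\<alpha>\<in>root_lattice \<Delta>. \<forall>l. \<phi> ` G \<alpha> l = G' (\<phi>r \<alpha>) (\<phi>e l + \<phi>s \<alpha>))"

lemma isotopic_weak_isotopy:
  assumes "isotopic sc br \<Delta> G sc' br' \<Delta>' G'"
  obtains \<phi> \<phi>r \<phi>e \<phi>s where "weak_isotopy sc br \<Delta> G sc' br' \<Delta>' G' \<phi> \<phi>r \<phi>e \<phi>s"
proof -
  obtain \<phi> \<phi>r \<phi>e \<phi>s where "lie_isomorphism sc br sc' br' \<phi>"
    and "bij_betw \<phi>r (root_lattice \<Delta>) (root_lattice \<Delta>')" and "bij \<phi>e"
    and "\<forall>l m. \<phi>e (l + m) = \<phi>e l + \<phi>e m"
    and "\<forall>\<alpha>\<in>root_lattice \<Delta>. \<forall>l. \<phi> ` G \<alpha> l = G' (\<phi>r \<alpha>) (\<phi>e l + \<phi>s \<alpha>)"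
    using assms unfolding isotopic_def by (elim exE conjE) (rule that)
  then show ?thesis
    by (intro that[of \<phi> \<phi>r \<phi>e \<phi>s]) (simp add: weak_isotopy_def Modules.additive_def)
qed

lemma weak_isotopy_inv:
  assumes "weak_isotopy sc br \<Delta> G sc' br' \<Delta>' G' \<phi> \<phi>r \<phi>e \<phi>s"
  defines "\<psi>r \<equiv> inv_into (root_lattice \<Delta>) \<phi>r"
  shows "weak_isotopy sc' br' \<Delta>' G' sc br \<Delta> G (inv_into UNIV \<phi>) \<psi>r (inv_into UNIV \<phi>e) (\<lambda>\<alpha>'. - inv_into UNIV \<phi>e (\<phi>s (\<psi>r \<alpha>')))"
proof -
  have \<phi>: "lie_isomorphism sc br sc' br' \<phi>" and \<phi>r: "bij_betw \<phi>r (root_lattice \<Delta>) (root_lattice \<Delta>')"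
    and "bij \<phi>e" and "Modules.additive \<phi>e"
    and graded: "\<And>\<alpha> l. \<alpha> \<in> root_lattice \<Delta> \<Longrightarrow> \<phi> ` G \<alpha> l = G' (\<phi>r \<alpha>) (\<phi>e l + \<phi>s \<alpha>)"
    using assms(1) unfolding weak_isotopy_def by auto
  have "inv_into UNIV \<phi> ` G' \<alpha>' l' = G (\<psi>r \<alpha>') (inv_into UNIV \<phi>e l' - inv_into UNIV \<phi>e (\<phi>s (\<psi>r \<alpha>')))"
    if "\<alpha>' \<in> root_lattice \<Delta>'" for \<alpha>' l'
  proof -
    have "\<psi>r \<alpha>' \<in> root_lattice \<Delta>" "\<phi>r (\<psi>r \<alpha>') = \<alpha>'"
      using \<phi>r that unfolding \<psi>r_def by (auto intro: bij_betw_apply bij_betw_inv_into bij_betw_inv_into_right)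
    moreover have "\<phi>e (inv_into UNIV \<phi>e l' - inv_into UNIV \<phi>e (\<phi>s (\<psi>r \<alpha>'))) + \<phi>s (\<psi>r \<alpha>') = l'"
      using \<open>bij \<phi>e\<close> \<open>Modules.additive \<phi>e\<close> by (simp add: additive.diff bij_is_surj surj_f_inv_f)
    ultimately have "G' \<alpha>' l' = \<phi> ` G (\<psi>r \<alpha>') (inv_into UNIV \<phi>e l' - inv_into UNIV \<phi>e (\<phi>s (\<psi>r \<alpha>')))"
      using graded by metis
    then show ?thesis
      using \<phi> by (simp add: lie_isomorphism_def bij_is_inj image_inv_f_f)
  qed
  then show ?thesis
    unfolding weak_isotopy_def
    using lie_isomorphism_inv[OF \<phi>] bij_betw_inv_into[OF \<phi>r] \<open>bij \<phi>e\<close> \<open>Modules.additive \<phi>e\<close>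
    by (simp add: \<psi>r_def bij_imp_bij_inv additive_inv)
qed

lemma weak_isotopy_conj_homogeneous:
  assumes lt': "lie_torus sc' br' \<Delta>' G'"
    and iso: "weak_isotopy sc br \<Delta> G sc' br' \<Delta>' G' \<phi> \<phi>r \<phi>e \<phi>s"
    and "Modules.additive c" and c: "\<And>\<alpha> m x. x \<in> G \<alpha> m \<Longrightarrow> c x \<in> G \<alpha> (m + l)"
    and x': "x' \<in> G' \<alpha>' m'"
  shows "(\<phi> \<circ> c \<circ> inv_into UNIV \<phi>) x' \<in> G' \<alpha>' (m' + \<phi>e l)"
proof -
  have \<phi>: "lie_isomorphism sc br sc' br' \<phi>" and \<phi>r: "bij_betw \<phi>r (root_lattice \<Delta>) (root_lattice \<Delta>')"
    and "bij \<phi>e" and "Modules.additive \<phi>e"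
    and graded: "\<And>\<alpha> l. \<alpha> \<in> root_lattice \<Delta> \<Longrightarrow> \<phi> ` G \<alpha> l = G' (\<phi>r \<alpha>) (\<phi>e l + \<phi>s \<alpha>)"
    using iso unfolding weak_isotopy_def by auto
  show ?thesis
  proof (cases "\<alpha>' \<in> root_lattice \<Delta>'")
    case False
    then have "x' = 0"
      using x' lie_torus_outside_root_lattice[OF lt'] by blast
    moreover have "(\<phi> \<circ> c \<circ> inv_into UNIV \<phi>) 0 = 0"
      using \<open>Modules.additive c\<close> lie_isomorphism_additive[OF \<phi>]
        lie_isomorphism_additive[OF lie_isomorphism_inv[OF \<phi>]]
      by (simp add: additive.zero)
    ultimately show ?thesis
      using lie_torus_zero[OF lt'] by simp
  next
    case True
    then obtain \<alpha> where \<alpha>: "\<alpha> \<in> root_lattice \<Delta>" "\<alpha>' = \<phi>r \<alpha>"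
      using \<phi>r by (metis bij_betw_imp_surj_on imageE)
    define m where "m = inv_into UNIV \<phi>e (m' - \<phi>s \<alpha>)"
    have m: "\<phi>e m + \<phi>s \<alpha> = m'" "\<phi>e (m + l) + \<phi>s \<alpha> = m' + \<phi>e l"
      using \<open>bij \<phi>e\<close> \<open>Modules.additive \<phi>e\<close> by (simp_all add: m_def additive.add bij_is_surj surj_f_inv_f)
    obtain x where "x \<in> G \<alpha> m" "x' = \<phi> x"
      using x' graded[OF \<alpha>(1), of m] \<alpha>(2) m(1) by blast
    then have "(\<phi> \<circ> c \<circ> inv_into UNIV \<phi>) x' \<in> \<phi> ` G \<alpha> (m + l)"
      using \<phi> c by (simp add: lie_isomorphism_def bij_is_inj)
    then show ?thesis
      using graded[OF \<alpha>(1)] \<alpha>(2) m(2) by simp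
  qed
qed

lemma Gamma_image_subset:
  assumes lt: "lie_torus sc br \<Delta> G" and lt': "lie_torus sc' br' \<Delta>' G'"
    and iso: "weak_isotopy sc br \<Delta> G sc' br' \<Delta>' G' \<phi> \<phi>r \<phi>e \<phi>s"
  shows "\<phi>e ` Gamma sc br G \<subseteq> Gamma sc' br' G'"
proof
  fix l' assume "l' \<in> \<phi>e ` Gamma sc br G"
  then obtain l c where l': "l' = \<phi>e l" and c: "c \<in> centroid_deg sc br G l" "c \<noteq> (\<lambda>x. 0)"
    using mem_Gamma_iff[OF lie_torus_lie_algebra[OF lt]] by blast
  have \<phi>: "lie_isomorphism sc br sc' br' \<phi>"
    using iso by (simp add: weak_isotopy_def)
  have c_cent: "c \<in> centroid sc br" and c_hom: "\<And>\<alpha> m x. x \<in> G \<alpha> m \<Longrightarrow> c x \<in> G \<alpha> (m + l)"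
    using c(1) centroid_deg_iff[OF lt] by blast+
  have "\<phi> \<circ> c \<circ> inv_into UNIV \<phi> \<in> centroid sc' br'"
    by (rule centroid_conj[OF \<phi> c_cent])
  moreover have "(\<phi> \<circ> c \<circ> inv_into UNIV \<phi>) x' \<in> G' \<alpha>' (m' + l')" if "x' \<in> G' \<alpha>' m'" for \<alpha>' m' x'
    using weak_isotopy_conj_homogeneous[OF lt' iso centroid_additive[OF c_cent] c_hom that] l' by simp
  ultimately have "\<phi> \<circ> c \<circ> inv_into UNIV \<phi> \<in> centroid_deg sc' br' G' l'"
    by (simp add: centroid_deg_iff[OF lt'])
  moreover have "\<phi> \<circ> c \<circ> inv_into UNIV \<phi> \<noteq> (\<lambda>x. 0)"
  proof
    assume conj_0: "\<phi> \<circ> c \<circ> inv_into UNIV \<phi> = (\<lambda>x. 0)"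
    have "c x = 0" for x
    proof -
      have "c x = inv_into UNIV \<phi> ((\<phi> \<circ> c \<circ> inv_into UNIV \<phi>) (\<phi> x))"
        using \<phi> by (simp add: lie_isomorphism_def bij_is_inj)
      also have "\<dots> = 0"
        using conj_0 additive.zero[OF lie_isomorphism_additive[OF lie_isomorphism_inv[OF \<phi>]]] by simp
      finally show ?thesis .
    qed
    then show False
      using c(2) by auto
  qed
  ultimately show "l' \<in> Gamma sc' br' G'"
    using mem_Gamma_iff[OF lie_torus_lie_algebra[OF lt']] by blast
qed

lemma Gamma_image_eq:
  assumes "lie_torus sc br \<Delta> G" and "lie_torus sc' br' \<Delta>' G'"
    and iso: "weak_isotopy sc br \<Delta> G sc' br' \<Delta>' G' \<phi> \<phi>r \<phi>e \<phi>s"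
  shows "\<phi>e ` Gamma sc br G = Gamma sc' br' G'"
proof
  show "\<phi>e ` Gamma sc br G \<subseteq> Gamma sc' br' G'"
    using assms by (rule Gamma_image_subset)
  have "inv_into UNIV \<phi>e ` Gamma sc' br' G' \<subseteq> Gamma sc br G"
    using assms(2,1) weak_isotopy_inv[OF iso] by (rule Gamma_image_subset)
  moreover have "bij \<phi>e"
    using iso by (simp add: weak_isotopy_def)
  ultimately show "Gamma sc' br' G' \<subseteq> \<phi>e ` Gamma sc br G"
    by (metis bij_is_surj image_mono image_f_inv_f)
qed

theorem proposition7p1:
  fixes sc :: "'k::field_char_0 \<Rightarrow> 'L::ab_group_add \<Rightarrow> 'L" and br :: "'L \<Rightarrow> 'L \<Rightarrow> 'L"
    and \<Delta> :: "'v::euclidean_space set" and G :: "'v \<Rightarrow> 'g::ab_group_add \<Rightarrow> 'L set"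
    and sc' :: "'k \<Rightarrow> 'M::ab_group_add \<Rightarrow> 'M" and br' :: "'M \<Rightarrow> 'M \<Rightarrow> 'M"
    and \<Delta>' :: "'w::euclidean_space set" and G' :: "'w \<Rightarrow> 'h::ab_group_add \<Rightarrow> 'M set"
  assumes "lie_torus sc br \<Delta> G" and "centreless br"
    and "lie_torus sc' br' \<Delta>' G'" and "centreless br'"
    and "isotopic sc br \<Delta> G sc' br' \<Delta>' G'"
  shows "addgrp TYPE('g) Mod Gamma sc br G \<cong> addgrp TYPE('h) Mod Gamma sc' br' G'"
proof -
  obtain \<phi> \<phi>r \<phi>e \<phi>s where iso: "weak_isotopy sc br \<Delta> G sc' br' \<Delta>' G' \<phi> \<phi>r \<phi>e \<phi>s"
    using assms(5) by (rule isotopic_weak_isotopy)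
  then have "bij \<phi>e" and "Modules.additive \<phi>e"
    by (simp_all add: weak_isotopy_def)
  moreover have "\<phi>e ` Gamma sc br G = Gamma sc' br' G'"
    using assms(1,3) iso by (rule Gamma_image_eq)
  ultimately show ?thesis
    by (rule addgrp_Mod_iso)
qed

end
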